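(* Let $p>q>1$ be relatively prime integers. For every $h\ge 0$, the set $\{w^{-1}L_{\frac pq}\cap A_p^h \mid w\in L_{\frac pq}\setminus\{\varepsilon\}\}$ is a partition of $A_p^h$ into $q^h$ non-empty languages.
   Context: $A_p=\{0,\ldots,p-1\}$. For $w=w_\ell\cdots w_0\in A_p^*$, $\mathrm{val}_{\frac pq}(w)=\sum_{i=0}^{\ell}\frac{w_i}{q}\left(\frac pq\right)^i$. Every integer $n\ge0$ has a unique representation $\mathrm{rep}_{\frac pq}(n)\in A_p^*$ not starting with $0$ with value $n$ ($\mathrm{rep}_{\frac pq}(0)=\varepsilon$), and $L_{\frac pq}=\{\mathrm{rep}_{\frac pq}(n): n\ge 0\}$. For a word $w$, $w^{-1}L=\{u: wu\in L\}$. *)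

theory Defs
  imports Complex_Main "HOL-Library.Disjoint_Sets"
begin

text \<open>Words are lists of digits, most significant digit first:
  the list [w_l, ..., w_0] represents w = w_l ... w_0.\<close>

definition alph :: "nat \<Rightarrow> nat set" where
  "alph p = {0..<p}"

definition val_pq :: "nat \<Rightarrow> nat \<Rightarrow> nat list \<Rightarrow> real" where
  "val_pq p q w = (\<Sum>i<length w. real (rev w ! i) / real q * (real p / real q) ^ i)"

definition rep_pq :: "nat \<Rightarrow> nat \<Rightarrow> nat \<Rightarrow> nat list" where
  "rep_pq p q n = (THE w. w \<in> lists (alph p) \<and> (w = [] \<or> hd w \<noteq> 0) \<and> val_pq p q w = real n)"

definition L_pq :: "nat \<Rightarrow> nat \<Rightarrow> nat list set" where
  "L_pq p q = range (rep_pq p q)"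

definition left_quot :: "'a list \<Rightarrow> 'a list set \<Rightarrow> 'a list set" where
  "left_quot w L = {u. w @ u \<in> L}"

definition words_len :: "nat \<Rightarrow> nat \<Rightarrow> nat list set" where
  "words_len p h = {u. u \<in> lists (alph p) \<and> length u = h}"

end

theory Submission
  imports Defs "HOL-Number_Theory.Cong"
begin

text \<open>Representations exist and are unique, so a word lies in \<open>L_pq p q\<close> exactly when it is a
  digit word without leading zero whose value is a natural number. For \<open>w = rep n\<close> with
  \<open>n > 0\<close> and \<open>u\<close> of length \<open>h\<close>, the value of \<open>w u\<close> is \<open>(p^h n + N u) / q^h\<close>
  with \<open>N u = q^h val u \<in> \<nat>\<close> (\<open>val_numer\<close>), so \<open>u \<in> w\<^sup>-\<^sup>1L\<close> iff \<open>q^h\<close> divides \<open>p^h n + N u\<close>.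
  This condition depends only on \<open>n mod q^h\<close>; since \<open>p\<close> is invertible modulo \<open>q^h\<close>, every
  \<open>u\<close> satisfies it for exactly one residue, and each residue class is hit by some \<open>u\<close>
  (choose the digits one at a time).\<close>

lemma Ints_if_coprime_multiples:
  fixes x :: "'a :: ring_1" and a b :: int
  assumes "coprime a b" "of_int a * x \<in> \<int>" "of_int b * x \<in> \<int>"
  shows "x \<in> \<int>"
proof -
  obtain s t where "s * a + t * b = 1"
    using bezout_int[of a b] assms(1) by auto
  then have "x = of_int (s * a + t * b) * x"
    by simp
  also have "\<dots> = of_int s * (of_int a * x) + of_int t * (of_int b * x)"
    by (simp add: distrib_right mult.assoc)
  also have "\<dots> \<in> \<int>"
    using Ints_mult[OF Ints_of_int assms(2)] Ints_mult[OF Ints_of_int assms(3)] by (rule Ints_add)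
  finally show ?thesis .
qed

lemma of_nat_divide_in_Nats_iff:
  assumes "b > 0"
  shows "real a / real b \<in> \<nat> \<longleftrightarrow> b dvd a"
proof
  assume "real a / real b \<in> \<nat>"
  then obtain k where "real a / real b = real k" by (auto elim: Nats_cases)
  then have "a = b * k" using assms by (simp add: field_simps flip: of_nat_mult)
  then show "b dvd a" ..
qed (use assms in \<open>auto simp: real_of_nat_div\<close>)

lemma exists_less_dvd_add:
  assumes "(m :: nat) > 0"
  shows "\<exists>a<m. m dvd x + a"
proof (cases "m dvd x")
  case False
  then have r: "0 < x mod m" "x mod m < m"
    using assms by (simp_all add: mod_greater_zero_iff_not_dvd)
  have "x + (m - x mod m) = m * (x div m) + m"
    using r mult_div_mod_eq[of m x] by linarith
  then show ?thesis
    using r by (intro exI[of _ "m - x mod m"]) simp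
qed (use assms in auto)

lemma partition_on_residue_indexed:
  fixes C :: "nat \<Rightarrow> 'a set"
  assumes "M > 0"
    and subset: "\<And>n. C n \<subseteq> A"
    and nonempty: "\<And>n. C n \<noteq> {}"
    and cover: "\<And>x. x \<in> A \<Longrightarrow> \<exists>n. x \<in> C n"
    and cong: "\<And>n n'. [n = n'] (mod M) \<Longrightarrow> C n = C n'"
    and meet: "\<And>n n' x. x \<in> C n \<Longrightarrow> x \<in> C n' \<Longrightarrow> [n = n'] (mod M)"
  shows "partition_on A (C ` {0<..}) \<and> card (C ` {0<..}) = M"
proof
  have shift: "C n = C (n mod M + M)" for n
    by (rule cong) (simp add: cong_def)
  have "C n \<in> C ` {0<..}" for n
    using shift[of n] assms(1) by (intro image_eqI[of _ _ "n mod M + M"]) auto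
  then have classes: "C ` {0<..} = range C"
    by blast
  have "disjoint (range C)"
  proof (rule disjointI)
    fix X Y assume "X \<in> range C" "Y \<in> range C" "X \<noteq> Y"
    then obtain n n' where "X = C n" "Y = C n'" "C n \<noteq> C n'"
      by blast
    then show "X \<inter> Y = {}"
      using meet cong by blast
  qed
  moreover have "\<Union> (range C) = A"
    using subset cover by blast
  ultimately show "partition_on A (C ` {0<..})"
    unfolding classes partition_on_def using nonempty by auto
  have "C n \<in> C ` {..<M}" for n
    using cong[of n "n mod M"] assms(1) by (intro image_eqI[of _ _ "n mod M"]) (auto simp: cong_def)
  then have "range C = C ` {..<M}"
    by blast
  moreover have "inj_on C {..<M}"
  proof
    fix r r' assume "r \<in> {..<M}" "r' \<in> {..<M}" "C r = C r'"
    moreover obtain x where "x \<in> C r"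
      using nonempty by blast
    ultimately show "r = r'"
      using meet cong_less_modulus_unique_nat by (metis lessThan_iff)
  qed
  ultimately show "card (C ` {0<..}) = M"
    by (simp add: classes card_image)
qed

lemma val_pq_Nil [simp]: "val_pq p q [] = 0"
  by (simp add: val_pq_def)

lemma val_pq_Cons:
  "val_pq p q (a # u) = real a / real q * (real p / real q) ^ length u + val_pq p q u"
  by (simp add: val_pq_def nth_append)

lemma val_pq_append:
  "val_pq p q (w @ u) = (real p / real q) ^ length u * val_pq p q w + val_pq p q u"
  by (induction w) (simp_all add: val_pq_Cons algebra_simps power_add)

lemma val_pq_snoc: "val_pq p q (w @ [a]) = real p / real q * val_pq p q w + real a / real q"
  by (simp add: val_pq_append val_pq_Cons)

lemma val_pq_nonneg: "val_pq p q w \<ge> 0"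
  by (simp add: val_pq_def sum_nonneg)

lemma val_pq_pos:
  assumes "p > 0" "q > 0" "w \<noteq> []" "hd w \<noteq> 0"
  shows "val_pq p q w > 0"
proof -
  obtain a u where "w = a # u" "a \<noteq> 0" using assms(3,4) by (cases w) auto
  then show ?thesis
    using assms(1,2) val_pq_nonneg[of p q u] by (simp add: val_pq_Cons add_pos_nonneg)
qed

fun val_numer :: "nat \<Rightarrow> nat \<Rightarrow> nat list \<Rightarrow> nat" where
  "val_numer p q [] = 0"
| "val_numer p q (a # u) = a * p ^ length u + q * val_numer p q u"

lemma val_numer_eq:
  assumes "q > 0"
  shows "real (val_numer p q u) = real q ^ length u * val_pq p q u"
  using assms by (induction u) (simp_all add: val_pq_Cons field_simps)

lemma val_pq_append_in_Nats_iff: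
  assumes "q > 0" and "val_pq p q w = real n"
  shows "val_pq p q (w @ u) \<in> \<nat> \<longleftrightarrow> q ^ length u dvd p ^ length u * n + val_numer p q u"
proof -
  have "val_pq p q (w @ u) = real (p ^ length u * n + val_numer p q u) / real (q ^ length u)"
    using assms by (simp add: val_pq_append val_numer_eq field_simps)
  then show ?thesis using assms(1) by (simp only: of_nat_divide_in_Nats_iff zero_less_power)
qed

definition canonical_word :: "nat \<Rightarrow> nat list \<Rightarrow> bool" where
  "canonical_word p w \<longleftrightarrow> w \<in> lists (alph p) \<and> (w = [] \<or> hd w \<noteq> 0)"

lemma canonical_word_snoc_iff:
  "canonical_word p (u @ [a]) \<longleftrightarrow> canonical_word p u \<and> a < p \<and> (u = [] \<longrightarrow> a \<noteq> 0)"
  by (cases u) (auto simp: canonical_word_def alph_def)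

definition quot_words :: "nat \<Rightarrow> nat \<Rightarrow> nat \<Rightarrow> nat \<Rightarrow> nat list set" where
  "quot_words p q h n = {u \<in> words_len p h. q ^ h dvd p ^ h * n + val_numer p q u}"

lemma quot_words_cong:
  assumes "[n = n'] (mod q ^ h)"
  shows "quot_words p q h n = quot_words p q h n'"
proof -
  have "[p ^ h * n + val_numer p q u = p ^ h * n' + val_numer p q u] (mod q ^ h)" for u
    using assms by (intro cong_add cong_mult cong_refl)
  then have "q ^ h dvd p ^ h * n + val_numer p q u \<longleftrightarrow> q ^ h dvd p ^ h * n' + val_numer p q u" for u
    by (rule cong_dvd_iff)
  then show ?thesis
    unfolding quot_words_def by simp
qed

locale rational_base =
  fixes p q :: nat
  assumes q_gt_1: "q > 1" and q_less_p: "q < p" and coprime_pq: "coprime p q"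
begin

lemma digit_step_less:
  assumes "q * n = p * m + a" and "n > 0"
  shows "m < n"
proof -
  have "p * m \<le> q * n" using assms(1) by simp
  also have "\<dots> < p * n" using q_less_p assms(2) by simp
  finally show ?thesis by simp
qed

lemma val_pq_prefix_in_Nats:
  assumes "val_pq p q (u @ [a]) = real n"
  obtains m where "val_pq p q u = real m" and "q * n = p * m + a"
proof -
  have pv: "real p * val_pq p q u = real (q * n) - real a"
    using assms q_gt_1 by (simp add: val_pq_snoc field_simps)
  have "coprime (int p) (int q ^ length u)"
    using coprime_pq by simp
  moreover have "of_int (int p) * val_pq p q u \<in> \<int>"
    by (simp add: pv)
  moreover have "of_int (int q ^ length u) * val_pq p q u \<in> \<int>"
    using q_gt_1 by (simp flip: val_numer_eq)
  ultimately have "val_pq p q u \<in> \<int>"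
    by (rule Ints_if_coprime_multiples)
  then have "val_pq p q u \<in> \<nat>"
    using Nats_altdef2 val_pq_nonneg by blast
  then obtain m where m: "val_pq p q u = real m"
    by (auto elim: Nats_cases)
  with pv have "real (q * n) = real (p * m + a)"
    by simp
  then have "q * n = p * m + a"
    by (simp only: of_nat_eq_iff)
  with m show thesis by (rule that)
qed

lemma canonical_rep_exists: "\<exists>w. canonical_word p w \<and> val_pq p q w = real n"
proof (induction n rule: less_induct)
  case (less n)
  show ?case
  proof (cases "n = 0")
    case True
    then show ?thesis by (intro exI[of _ "[]"]) (simp add: canonical_word_def)
  next
    case False
    define m a where "m = q * n div p" and "a = q * n mod p"
    have qn: "q * n = p * m + a" and "a < p"
      using q_less_p by (simp_all add: m_def a_def)
    have "m < n"
      using digit_step_less qn False by blast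
    then obtain u where u: "canonical_word p u" "val_pq p q u = real m"
      using less by auto
    have "a \<noteq> 0" if "u = []"
    proof -
      have "m = 0" using that u(2) by simp
      then have "a = q * n" using qn by simp
      then show ?thesis using q_gt_1 False by simp
    qed
    moreover have "val_pq p q (u @ [a]) = real n"
    proof -
      have "real q * real n = real p * real m + real a"
        using arg_cong[OF qn, of real] by simp
      then show ?thesis using u(2) q_gt_1 by (simp add: val_pq_snoc field_simps)
    qed
    ultimately show ?thesis
      using u(1) \<open>a < p\<close> by (intro exI[of _ "u @ [a]"]) (auto simp: canonical_word_snoc_iff)
  qed
qed

lemma canonical_rep_unique:
  assumes "canonical_word p w" "canonical_word p w'"
    and "val_pq p q w = real n" "val_pq p q w' = real n"
  shows "w = w'"
  using assms
proof (induction n arbitrary: w w' rule: less_induct)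
  case (less n)
  show ?case
  proof (cases "n = 0")
    case True
    have zero: "v = []" if "canonical_word p v" "val_pq p q v = 0" for v
      using that val_pq_pos[of p q v] q_gt_1 q_less_p by (auto simp: canonical_word_def)
    show ?thesis using zero[of w] zero[of w'] less.prems True by simp
  next
    case False
    then have "w \<noteq> []" "w' \<noteq> []" using less.prems by auto
    then obtain u a u' a' where w: "w = u @ [a]" and w': "w' = u' @ [a']"
      by (metis rev_exhaust)
    obtain m where m: "val_pq p q u = real m" "q * n = p * m + a"
      using val_pq_prefix_in_Nats less.prems(3) w by blast
    obtain m' where m': "val_pq p q u' = real m'" "q * n = p * m' + a'"
      using val_pq_prefix_in_Nats less.prems(4) w' by blast
    have digits: "canonical_word p u" "a < p" "canonical_word p u'" "a' < p"
      using less.prems(1,2) w w' by (simp_all add: canonical_word_snoc_iff)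
    have "q * n div p = m \<and> q * n mod p = a" using m(2) digits(2) by simp
    moreover have "q * n div p = m' \<and> q * n mod p = a'" using m'(2) digits(4) by simp
    ultimately have same: "m' = m" "a' = a" by simp_all
    have "m < n"
      using digit_step_less m(2) False by blast
    then show ?thesis using less.IH[of m u u'] digits m m' w w' same by simp
  qed
qed

lemma rep_pq_canonical: "canonical_word p (rep_pq p q n) \<and> val_pq p q (rep_pq p q n) = real n"
proof -
  have "\<exists>!w. canonical_word p w \<and> val_pq p q w = real n"
    using canonical_rep_exists canonical_rep_unique by blast
  then show ?thesis
    unfolding rep_pq_def canonical_word_def conj_assoc by (rule theI')
qed

lemma rep_pq_eq_Nil_iff: "rep_pq p q n = [] \<longleftrightarrow> n = 0"
proof
  assume "rep_pq p q n = []"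
  then show "n = 0" using rep_pq_canonical[of n] by simp
next
  assume "n = 0"
  then show "rep_pq p q n = []"
    using rep_pq_canonical[of n] canonical_rep_unique[of "[]" "rep_pq p q n" n]
    by (simp add: canonical_word_def)
qed

lemma mem_L_pq_iff: "w \<in> L_pq p q \<longleftrightarrow> canonical_word p w \<and> val_pq p q w \<in> \<nat>"
proof
  assume "w \<in> L_pq p q"
  then show "canonical_word p w \<and> val_pq p q w \<in> \<nat>"
    using rep_pq_canonical by (auto simp: L_pq_def)
next
  assume "canonical_word p w \<and> val_pq p q w \<in> \<nat>"
  then obtain n where "canonical_word p w" "val_pq p q w = real n"
    by (auto elim: Nats_cases)
  then have "w = rep_pq p q n"
    using rep_pq_canonical canonical_rep_unique by blast
  then show "w \<in> L_pq p q" by (simp add: L_pq_def)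
qed

lemma left_quot_rep_pq:
  assumes "n > 0"
  shows "left_quot (rep_pq p q n) (L_pq p q) \<inter> words_len p h = quot_words p q h n"
proof -
  let ?w = "rep_pq p q n"
  have w: "canonical_word p ?w" "val_pq p q ?w = real n" "?w \<noteq> []"
    using rep_pq_canonical rep_pq_eq_Nil_iff assms by auto
  have "?w @ u \<in> L_pq p q \<longleftrightarrow> q ^ h dvd p ^ h * n + val_numer p q u"
    if "u \<in> words_len p h" for u
  proof -
    have "canonical_word p (?w @ u)"
      using w(1,3) that by (auto simp: canonical_word_def words_len_def)
    then show ?thesis
      using that w(2) q_gt_1 by (simp add: mem_L_pq_iff val_pq_append_in_Nats_iff words_len_def)
  qed
  then show ?thesis by (auto simp: left_quot_def quot_words_def)
qed

lemma left_quot_family_eq: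
  "{left_quot w (L_pq p q) \<inter> words_len p h | w. w \<in> L_pq p q - {[]}} = quot_words p q h ` {0<..}"
proof -
  have "L_pq p q - {[]} = rep_pq p q ` {0<..}"
    by (auto simp: L_pq_def rep_pq_eq_Nil_iff)
  then have "{left_quot w (L_pq p q) \<inter> words_len p h | w. w \<in> L_pq p q - {[]}}
      = (\<lambda>n. left_quot (rep_pq p q n) (L_pq p q) \<inter> words_len p h) ` {0<..}"
    by (simp add: setcompr_eq_image image_image)
  also have "\<dots> = quot_words p q h ` {0<..}"
    by (rule image_cong) (simp_all add: left_quot_rep_pq)
  finally show ?thesis .
qed

lemma quot_words_meet_cong:
  assumes "u \<in> quot_words p q h n" and "u \<in> quot_words p q h n'"
  shows "[n = n'] (mod q ^ h)"
proof -
  have "[p ^ h * n + val_numer p q u = 0] (mod q ^ h)" "[p ^ h * n' + val_numer p q u = 0] (mod q ^ h)"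
    using assms by (simp_all add: quot_words_def cong_0_iff)
  then have "[p ^ h * n + val_numer p q u = p ^ h * n' + val_numer p q u] (mod q ^ h)"
    by (rule cong_trans[OF _ cong_sym])
  then have "[p ^ h * n = p ^ h * n'] (mod q ^ h)"
    by (simp add: cong_add_rcancel_nat)
  moreover have "coprime (p ^ h) (q ^ h)"
    using coprime_pq by simp
  ultimately show ?thesis
    using cong_mult_lcancel_nat by blast
qed

lemma quot_words_nonempty: "quot_words p q h n \<noteq> {}"
proof -
  have "\<exists>u \<in> words_len p h. q ^ h dvd p ^ h * n + val_numer p q u"
  proof (induction h arbitrary: n)
    case 0
    then show ?case by (simp add: words_len_def)
  next
    case (Suc h)
    obtain a where a: "a < q" "q dvd p * n + a"
      using exists_less_dvd_add[of q "p * n"] q_gt_1 by auto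
    define n' where "n' = (p * n + a) div q"
    obtain u where u: "u \<in> words_len p h" "q ^ h dvd p ^ h * n' + val_numer p q u"
      using Suc.IH by blast
    have qn': "p * n + a = q * n'"
      using a(2) by (simp add: n'_def)
    have "p ^ Suc h * n + val_numer p q (a # u) = p ^ h * (p * n + a) + q * val_numer p q u"
      using u(1) by (simp add: words_len_def algebra_simps)
    also have "\<dots> = q * (p ^ h * n' + val_numer p q u)"
      unfolding qn' by (simp add: algebra_simps)
    finally have "q ^ Suc h dvd p ^ Suc h * n + val_numer p q (a # u)"
      using u(2) by simp
    moreover have "a # u \<in> words_len p (Suc h)"
      using u(1) a(1) q_less_p by (simp add: words_len_def alph_def)
    ultimately show ?case by blast
  qed
  then show ?thesis by (auto simp: quot_words_def)
qed

lemma quot_words_cover: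
  assumes "u \<in> words_len p h"
  shows "\<exists>n. u \<in> quot_words p q h n"
proof -
  define M N where "M = q ^ h" and "N = val_numer p q u"
  have "M > 0" using q_gt_1 by (simp add: M_def)
  have "coprime (p ^ h) M"
    using coprime_pq by (simp add: M_def)
  then obtain x where x: "[p ^ h * x = 1] (mod M)"
    unfolding One_nat_def by (blast dest: cong_solve_coprime_nat)
  have "[p ^ h * x * ((M - 1) * N) + N = 1 * ((M - 1) * N) + N] (mod M)"
    using x by (intro cong_add cong_mult cong_refl)
  also have "1 * ((M - 1) * N) + N = M * N"
    using \<open>M > 0\<close> by (simp add: algebra_simps)
  also have "[M * N = 0] (mod M)"
    by (simp add: cong_0_iff)
  finally have "M dvd p ^ h * (x * (M - 1) * N) + N"
    by (simp add: cong_0_iff mult.assoc)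
  then show ?thesis
    using assms by (auto simp: quot_words_def M_def N_def)
qed

lemma quot_words_partition:
  "partition_on (words_len p h) (quot_words p q h ` {0<..}) \<and> card (quot_words p q h ` {0<..}) = q ^ h"
proof (rule partition_on_residue_indexed)
  show "q ^ h > 0"
    using q_gt_1 by simp
  show "quot_words p q h n \<subseteq> words_len p h" for n
    by (auto simp: quot_words_def)
qed (fact quot_words_nonempty quot_words_cover quot_words_cong quot_words_meet_cong)+

end

theorem mainTheorem9:
  fixes p q h :: nat
  assumes "q > 1" and "p > q" and "coprime p q"
  shows "partition_on (words_len p h)
           {left_quot w (L_pq p q) \<inter> words_len p h | w. w \<in> L_pq p q - {[]}}
         \<and> card {left_quot w (L_pq p q) \<inter> words_len p h | w. w \<in> L_pq p q - {[]}} = q ^ h"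
proof -
  interpret rational_base p q
    using assms by unfold_locales
  show ?thesis
    unfolding left_quot_family_eq by (rule quot_words_partition)
qed

end
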